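(* Let $I\subset F$ be a two-sided ideal generated by finitely many monomials, with $d$ the maximal degree of a finite monomial basis of $I$, and $A=F/I$. Let $M=\langle e_i\bar w_{ij}\rangle\subset\bigoplus_{i=1}^rA[-\delta_i]$ be a finitely generated monomial right submodule, where $\bar w_{ij}=w_{ij}+I$ with $w_{ij}\in W\setminus I$, let $\Delta_{ij}=\delta_i+\deg w_{ij}$, $\Delta=\max\Delta_{ij}$, and $\varphi:\bigoplus_{i,j}A[-\Delta_{ij}]\to\bigoplus_iA[-\delta_i]$, $\epsilon_{ij}\mapsto e_i\bar w_{ij}$. Then the right syzygy module $K=\mathrm{Ker}\,\varphi$ is finitely generated and monomial (generated by elements $\epsilon_{ij}(u+I)$ with $u\in W$), and the maximal degree of an element of a minimal monomial basis of $K$ is at most $\Delta+d-1$.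
   Context: $\mathbb K$ is a field, $F=\mathbb K\langle x_1,\dots,x_n\rangle$ the free associative algebra with standard grading, $W$ its set of monomials. $A[-\delta]_e=A_{e-\delta}$; $\bigoplus_iA[-\delta_i]$ is the graded free right $A$-module with basis $e_i$ of degree $\delta_i$, and $\bigoplus_{i,j}A[-\Delta_{ij}]$ the graded free right $A$-module with basis $\epsilon_{ij}$ of degree $\Delta_{ij}$. *)

theory Defs
  imports Main "HOL-Library.Sublist"
begin

text \<open>Monomials of F = K<x_1,...,x_n> are words over a finite alphabet 'x.
  Noncommutative polynomials are finitely supported functions word => 'k.\<close>

definition inI :: "'x list set \<Rightarrow> 'x list \<Rightarrow> bool" where
  "inI G w \<longleftrightarrow> (\<exists>g\<in>G. sublist g w)"

definition monomial_basis :: "'x list set \<Rightarrow> bool" where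
  "monomial_basis G \<longleftrightarrow> finite G \<and>
     (\<forall>g\<in>G. \<forall>h\<in>G. sublist g h \<longrightarrow> g = h)"

text \<open>Elements of A = F/I, represented in the basis of normal words (W minus I).\<close>
definition inA :: "'x list set \<Rightarrow> ('x list \<Rightarrow> 'k::zero) \<Rightarrow> bool" where
  "inA G a \<longleftrightarrow> finite {w. a w \<noteq> 0} \<and> (\<forall>w. inI G w \<longrightarrow> a w = 0)"

text \<open>Elements of the free right A-module with basis indexed by J, written in the
  K-basis eps_b (u+I), u a normal word.\<close>
definition fmod :: "'x list set \<Rightarrow> 'b set \<Rightarrow> ('b \<times> 'x list \<Rightarrow> 'k::zero) \<Rightarrow> bool" where
  "fmod G J f \<longleftrightarrow> finite {p. f p \<noteq> 0} \<and>
     (\<forall>b u. f (b, u) \<noteq> 0 \<longrightarrow> b \<in> J \<and> \<not> inI G u)"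

definition rmul :: "'x list set \<Rightarrow> ('b \<times> 'x list \<Rightarrow> 'k::comm_semiring_1)
     \<Rightarrow> ('x list \<Rightarrow> 'k) \<Rightarrow> ('b \<times> 'x list \<Rightarrow> 'k)" where
  "rmul G f a = (\<lambda>(b, w). if inI G w then 0
      else (\<Sum>k\<le>length w. f (b, take k w) * a (drop k w)))"

inductive_set rsub :: "'x list set \<Rightarrow> ('b \<times> 'x list \<Rightarrow> 'k::comm_semiring_1) set
     \<Rightarrow> ('b \<times> 'x list \<Rightarrow> 'k) set"
  for G :: "'x list set" and S :: "('b \<times> 'x list \<Rightarrow> 'k) set" where
  zero: "(\<lambda>_. 0) \<in> rsub G S"
| gen: "s \<in> S \<Longrightarrow> s \<in> rsub G S"
| add: "f \<in> rsub G S \<Longrightarrow> g \<in> rsub G S \<Longrightarrow> (\<lambda>p. f p + g p) \<in> rsub G S"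
| mul: "f \<in> rsub G S \<Longrightarrow> inA G a \<Longrightarrow> rmul G f a \<in> rsub G S"

definition mono :: "'b \<Rightarrow> 'x list \<Rightarrow> ('b \<times> 'x list \<Rightarrow> 'k::zero_neq_one)" where
  "mono b u = (\<lambda>p. if p = (b, u) then 1 else 0)"

text \<open>The map phi : eps_b |-> e_{fst b} (wg b + I), from the free module with basis
  indexed by J to the free module with basis e_1..e_r.\<close>
definition phi :: "'x list set \<Rightarrow> (nat \<times> nat) set \<Rightarrow> (nat \<times> nat \<Rightarrow> 'x list)
     \<Rightarrow> ((nat \<times> nat) \<times> 'x list \<Rightarrow> 'k::comm_monoid_add) \<Rightarrow> (nat \<times> 'x list \<Rightarrow> 'k)" where
  "phi G J wg f = (\<lambda>(i, w). if inI G w then 0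
      else (\<Sum>b\<in>{b\<in>J. fst b = i \<and> prefix (wg b) w}. f (b, drop (length (wg b)) w)))"

definition syz :: "'x list set \<Rightarrow> (nat \<times> nat) set \<Rightarrow> (nat \<times> nat \<Rightarrow> 'x list)
     \<Rightarrow> ((nat \<times> nat) \<times> 'x list \<Rightarrow> 'k::comm_monoid_add) set" where
  "syz G J wg = {f. fmod G J f \<and> phi G J wg f = (\<lambda>_. 0)}"

definition Deg :: "(nat \<Rightarrow> int) \<Rightarrow> (nat \<times> nat \<Rightarrow> 'x list) \<Rightarrow> nat \<times> nat \<Rightarrow> int" where
  "Deg \<delta> wg b = \<delta> (fst b) + int (length (wg b))"

end

theory Submission
  imports Defs
begin

text \<open>Since M is generated by monomials, a syzygy vanishes termwise: f lies in K iff every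
  monomial \<open>\<epsilon>\<^sub>b (t + I)\<close> in its support has \<open>w\<^sub>b t \<in> I\<close>, because the row words \<open>w\<^sub>b\<close>
  are prefix-free, so distinct monomials of f have distinct images. Hence K is generated by the
  monomials \<open>\<epsilon>\<^sub>b t\<close> with \<open>w\<^sub>b t \<in> I\<close> but \<open>w\<^sub>b t' \<notin> I\<close> for every proper prefix t' of t, and
  every element of a minimal monomial basis is of this form. For such t some generator g of I
  occurs in \<open>w\<^sub>b t\<close>; it must be a suffix (it is not contained in \<open>w\<^sub>b\<close> followed by t without its
  last letter) and it is longer than t (t is normal). So \<open>|t| \<le> d - 1\<close>.\<close>

lemma inI_sublist_mono: "inI G w \<Longrightarrow> sublist w v \<Longrightarrow> inI G v"
  unfolding inI_def by (meson sublist_order.dual_order.trans)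

lemma not_inI_prefix: "\<not> inI G w \<Longrightarrow> prefix v w \<Longrightarrow> \<not> inI G v"
  using inI_sublist_mono prefix_imp_sublist by blast

lemma not_inI_suffix: "\<not> inI G w \<Longrightarrow> suffix v w \<Longrightarrow> \<not> inI G v"
  using inI_sublist_mono suffix_imp_sublist by blast

text \<open>The submodule generated by the monomials \<open>\<epsilon>\<^sub>b (v + I)\<close>, (b, v) \<in> S, described by its
  K-basis: the right multiples of \<open>\<epsilon>\<^sub>b v\<close> are spanned by the \<open>\<epsilon>\<^sub>b w\<close> with v a prefix of w.\<close>

definition monomial_span :: "'x list set \<Rightarrow> ('b \<times> 'x list) set \<Rightarrow> ('b \<times> 'x list \<Rightarrow> 'k::zero) set" where
  "monomial_span G S = {f. finite {p. f p \<noteq> 0} \<and>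
     (\<forall>b w. f (b, w) \<noteq> 0 \<longrightarrow> \<not> inI G w \<and> (\<exists>v. (b, v) \<in> S \<and> prefix v w))}"

lemma rmul_nonzeroD:
  fixes f :: "'b \<times> 'x list \<Rightarrow> 'k::comm_semiring_1"
  assumes "rmul G f a (b, w) \<noteq> 0"
  obtains k where "\<not> inI G w" "f (b, take k w) \<noteq> 0" "a (drop k w) \<noteq> 0"
proof -
  have "\<not> inI G w" and "(\<Sum>k\<le>length w. f (b, take k w) * a (drop k w)) \<noteq> 0"
    using assms unfolding rmul_def by (auto split: if_splits)
  then obtain k where "f (b, take k w) * a (drop k w) \<noteq> 0"
    by (meson sum.not_neutral_contains_not_neutral)
  then show thesis
    using that \<open>\<not> inI G w\<close> by (metis mult_zero_left mult_zero_right)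
qed

lemma finite_support_rmul:
  fixes f :: "'b \<times> 'x list \<Rightarrow> 'k::comm_semiring_1"
  assumes "finite {p. f p \<noteq> 0}" "finite {y. a y \<noteq> 0}"
  shows "finite {p. rmul G f a p \<noteq> 0}"
proof (rule finite_subset)
  show "{p. rmul G f a p \<noteq> 0} \<subseteq> (\<lambda>((b, x), y). (b, x @ y)) ` ({p. f p \<noteq> 0} \<times> {y. a y \<noteq> 0})"
  proof clarify
    fix b w assume "rmul G f a (b, w) \<noteq> 0"
    then obtain k where "f (b, take k w) \<noteq> 0" "a (drop k w) \<noteq> 0" by (rule rmul_nonzeroD)
    then show "(b, w) \<in> (\<lambda>((b, x), y). (b, x @ y)) ` ({p. f p \<noteq> 0} \<times> {y. a y \<noteq> 0})"
      by (intro image_eqI[of _ _ "((b, take k w), drop k w)"]) auto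
  qed
qed (use assms in auto)

lemma rsub_subset_monomial_span:
  fixes S :: "('b \<times> 'x list) set"
  assumes "f \<in> rsub G ((\<lambda>(b, u). mono b u) ` S)" "\<forall>(b, u)\<in>S. \<not> inI G u"
  shows "f \<in> (monomial_span G S :: ('b \<times> 'x list \<Rightarrow> 'k::comm_semiring_1) set)"
  using assms(1)
proof (induction rule: rsub.induct)
  case zero
  show ?case by (simp add: monomial_span_def)
next
  case (gen s)
  then obtain b u where "s = mono b u" "(b, u) \<in> S" by auto
  with assms(2) show ?case by (auto simp: monomial_span_def mono_def)
next
  case (add f g)
  have "{p. f p + g p \<noteq> 0} \<subseteq> {p. f p \<noteq> 0} \<union> {p. g p \<noteq> 0}" by auto
  with add.IH show ?case
    unfolding monomial_span_def by (auto intro: finite_subset)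
next
  case (mul f a)
  have fin: "finite {p. rmul G f a p \<noteq> 0}"
    using mul.IH mul.hyps(2) by (intro finite_support_rmul) (auto simp: monomial_span_def inA_def)
  have "\<not> inI G w \<and> (\<exists>v. (b, v) \<in> S \<and> prefix v w)" if "rmul G f a (b, w) \<noteq> 0" for b w
  proof -
    obtain k where "\<not> inI G w" "f (b, take k w) \<noteq> 0" using \<open>rmul G f a (b, w) \<noteq> 0\<close> by (rule rmul_nonzeroD)
    moreover from this obtain v where "(b, v) \<in> S" "prefix v (take k w)"
      using mul.IH unfolding monomial_span_def by blast
    ultimately show ?thesis using take_is_prefix prefix_order.trans by blast
  qed
  with fin show ?case unfolding monomial_span_def by blast
qed

lemma rmul_mono_single:
  fixes c :: "'k::comm_semiring_1" and b :: 'b and v t :: "'x list"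
  assumes "\<not> inI G (v @ t)"
  shows "rmul G (mono b v) (\<lambda>s. if s = t then c else 0) = (\<lambda>q. if q = (b, v @ t) then c else 0)"
proof
  fix q :: "'b \<times> 'x list"
  obtain b' w where q: "q = (b', w)" by (cases q)
  have summand: "mono b v (b', take k w) * (if drop k w = t then c else 0)
      = (if k = length v then (if (b', w) = (b, v @ t) then c else 0) else 0)" if "k \<le> length w" for k
  proof (cases "k = length v")
    case True
    then show ?thesis by (auto simp: mono_def append_eq_conv_conj) (metis append_take_drop_id)
  next
    case False
    with that have "take k w \<noteq> v" by auto
    with False show ?thesis by (simp add: mono_def)
  qed
  show "rmul G (mono b v) (\<lambda>s. if s = t then c else 0) q = (if q = (b, v @ t) then c else 0)"
  proof (cases "inI G w")
    case True
    with assms show ?thesis by (auto simp: q rmul_def)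
  next
    case False
    then have "rmul G (mono b v) (\<lambda>s. if s = t then c else 0) q
        = (\<Sum>k\<le>length w. mono b v (b', take k w) * (if drop k w = t then c else 0))"
      by (simp add: q rmul_def)
    also have "\<dots> = (\<Sum>k\<le>length w. if k = length v then (if (b', w) = (b, v @ t) then c else 0) else 0)"
      by (rule sum.cong) (simp_all add: summand)
    also have "\<dots> = (if q = (b, v @ t) then c else 0)" by (auto simp: q)
    finally show ?thesis .
  qed
qed

lemma rsub_sum:
  assumes "finite A" "\<forall>p\<in>A. h p \<in> rsub G S"
  shows "(\<lambda>q. \<Sum>p\<in>A. h p q) \<in> rsub G S"
  using assms
proof (induction A rule: finite_induct)
  case empty
  then show ?case using rsub.zero by simp
next
  case (insert x F)
  then have "(\<lambda>q. h x q + (\<Sum>p\<in>F. h p q)) \<in> rsub G S" by (intro rsub.add) auto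
  with insert show ?case by simp
qed

lemma monomial_span_subset_rsub:
  fixes S :: "('b \<times> 'x list) set"
  assumes "f \<in> (monomial_span G S :: ('b \<times> 'x list \<Rightarrow> 'k::comm_semiring_1) set)"
  shows "f \<in> rsub G ((\<lambda>(b, u). mono b u) ` S)"
proof -
  let ?A = "{p. f p \<noteq> 0}"
  have fin: "finite ?A" using assms by (simp add: monomial_span_def)
  have "(\<lambda>q. if q = (b, w) then f (b, w) else 0) \<in> rsub G ((\<lambda>(b, u). mono b u) ` S)"
    if nonzero: "f (b, w) \<noteq> 0" for b w
  proof -
    obtain v where nw: "\<not> inI G w" and v: "(b, v) \<in> S" "prefix v w"
      using assms nonzero by (auto simp: monomial_span_def)
    then obtain t where w: "w = v @ t" by (auto simp: prefix_def)
    have "\<not> inI G t" using nw w not_inI_suffix by (metis suffixI)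
    then have "inA G (\<lambda>s. if s = t then f (b, w) else 0)"
      unfolding inA_def by (auto intro: finite_subset[of _ "{t}"])
    moreover have "mono b v \<in> rsub G ((\<lambda>(b, u). mono b u) ` S)"
      using v(1) by (intro rsub.gen) force
    ultimately have "rmul G (mono b v) (\<lambda>s. if s = t then f (b, w) else 0) \<in> rsub G ((\<lambda>(b, u). mono b u) ` S)"
      by (intro rsub.mul)
    then show ?thesis using nw by (simp add: w rmul_mono_single)
  qed
  then have "(\<lambda>q. \<Sum>p\<in>?A. if q = p then f p else 0) \<in> rsub G ((\<lambda>(b, u). mono b u) ` S)"
    by (intro rsub_sum[OF fin]) auto
  moreover have "(\<lambda>q. \<Sum>p\<in>?A. if q = p then f p else 0) = f"
    using fin by (auto simp: sum.delta)
  ultimately show ?thesis by simp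
qed

lemma rsub_monomials_eq_monomial_span:
  fixes S :: "('b \<times> 'x list) set"
  assumes "\<forall>(b, u)\<in>S. \<not> inI G u"
  shows "(rsub G ((\<lambda>(b, u). mono b u) ` S) :: ('b \<times> 'x list \<Rightarrow> 'k::comm_semiring_1) set)
    = monomial_span G S"
  using rsub_subset_monomial_span[OF _ assms] monomial_span_subset_rsub by blast

lemma mono_in_monomial_span_iff:
  "(mono b u :: 'b \<times> 'x list \<Rightarrow> 'k::zero_neq_one) \<in> monomial_span G S
    \<longleftrightarrow> \<not> inI G u \<and> (\<exists>v. (b, v) \<in> S \<and> prefix v u)"
proof -
  have "{p. (mono b u :: 'b \<times> 'x list \<Rightarrow> 'k) p \<noteq> 0} = {(b, u)}" by (auto simp: mono_def)
  then show ?thesis unfolding monomial_span_def by (simp add: mono_def)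
qed

lemma monomial_span_remove_redundant:
  assumes "(b, v) \<in> S" "strict_prefix v u"
  shows "monomial_span G (S - {(b, u)}) = monomial_span G S"
proof -
  have "\<exists>v'. (b', v') \<in> S - {(b, u)} \<and> prefix v' w" if "(b', v') \<in> S" "prefix v' w" for b' v' w
  proof (cases "(b', v') = (b, u)")
    case True
    then have "prefix v w" using assms(2) that(2) by (auto intro: prefix_order.trans)
    moreover have "(b', v) \<in> S - {(b, u)}" using True assms by auto
    ultimately show ?thesis by blast
  qed (use that in blast)
  then show ?thesis unfolding monomial_span_def by blast
qed

lemma strict_prefix_butlast: "xs \<noteq> [] \<Longrightarrow> strict_prefix (butlast xs) xs"
  by (metis append_butlast_last_id strict_prefixI')

lemma ex_minimal_prefix:
  assumes "P w"
  obtains t where "prefix t w" "P t" "\<And>t'. strict_prefix t' t \<Longrightarrow> \<not> P t'"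
proof -
  obtain t where t: "prefix t w \<and> P t" and least: "\<And>t'. prefix t' w \<and> P t' \<Longrightarrow> length t \<le> length t'"
    using ex_has_least_nat[of "\<lambda>t. prefix t w \<and> P t" w length] assms by blast
  have "\<not> P t'" if "strict_prefix t' t" for t'
    using least[of t'] prefix_length_less[OF that] that t prefix_order.trans
    by (metis leD prefix_order.less_imp_le)
  with t that show thesis by blast
qed

lemma obstruction_shorter_than_generator:
  assumes "\<not> inI G wb" "\<not> inI G u" "inI G (wb @ u)" "\<not> inI G (wb @ butlast u)"
  shows "\<exists>g\<in>G. length u < length g"
proof -
  obtain g ps ss where g: "g \<in> G" and split: "wb @ u = ps @ g @ ss"
    using assms(3) unfolding inI_def sublist_def by blast
  have "u \<noteq> []" using assms(1,3) by auto
  have "ss = []"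
  proof (rule ccontr)
    assume "ss \<noteq> []"
    then have "wb @ butlast u = ps @ g @ butlast ss"
      using split \<open>u \<noteq> []\<close> by (metis butlast_append append_is_Nil_conv)
    then have "inI G (wb @ butlast u)" using g unfolding inI_def by (metis sublist_appendI)
    with assms(4) show False by blast
  qed
  then have "suffix g (wb @ u)" using split by (simp add: suffix_def)
  moreover have "\<not> suffix g u" using assms(2) g not_inI_suffix inI_def by blast
  ultimately have "length u < length g"
    using suffix_length_suffix[of g "wb @ u" u] by (meson not_le suffixI)
  with g show ?thesis by blast
qed

definition prefix_free_rows :: "(nat \<times> nat) set \<Rightarrow> (nat \<times> nat \<Rightarrow> 'x list) \<Rightarrow> bool" where
  "prefix_free_rows J wg \<longleftrightarrow>
     (\<forall>b\<in>J. \<forall>b'\<in>J. b \<noteq> b' \<and> fst b = fst b' \<longrightarrow> \<not> prefix (wg b) (wg b'))"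

lemma phi_at_shifted_word:
  assumes "prefix_free_rows J wg" "b \<in> J" "\<not> inI G (wg b @ t)"
  shows "phi G J wg f (fst b, wg b @ t) = f (b, t)"
proof -
  have "b' = b" if "b' \<in> J" "fst b' = fst b" "prefix (wg b') (wg b @ t)" for b'
  proof (rule ccontr)
    assume "b' \<noteq> b"
    have "prefix (wg b') (wg b) \<or> prefix (wg b) (wg b')"
      using prefix_same_cases[OF that(3), of "wg b"] by simp
    with assms(1,2) that(1,2) \<open>b' \<noteq> b\<close> show False
      unfolding prefix_free_rows_def by metis
  qed
  then have "{b'\<in>J. fst b' = fst b \<and> prefix (wg b') (wg b @ t)} = {b}"
    using assms(2) by auto
  with assms(3) show ?thesis by (simp add: phi_def)
qed

lemma syz_iff:
  assumes "prefix_free_rows J wg"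
  shows "f \<in> syz G J wg \<longleftrightarrow> fmod G J f \<and> (\<forall>b t. f (b, t) \<noteq> 0 \<longrightarrow> inI G (wg b @ t))"
proof
  assume f: "f \<in> syz G J wg"
  have "inI G (wg b @ t)" if "f (b, t) \<noteq> 0" for b t
  proof (rule ccontr)
    assume "\<not> inI G (wg b @ t)"
    moreover have "b \<in> J" using f that unfolding syz_def fmod_def by blast
    ultimately have "phi G J wg f (fst b, wg b @ t) = f (b, t)"
      using phi_at_shifted_word[OF assms] by blast
    with f that show False by (simp add: syz_def)
  qed
  with f show "fmod G J f \<and> (\<forall>b t. f (b, t) \<noteq> 0 \<longrightarrow> inI G (wg b @ t))"
    by (simp add: syz_def)
next
  assume f: "fmod G J f \<and> (\<forall>b t. f (b, t) \<noteq> 0 \<longrightarrow> inI G (wg b @ t))"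
  have "phi G J wg f (i, w) = 0" for i w
  proof -
    have "f (b, drop (length (wg b)) w) = 0" if "\<not> inI G w" "prefix (wg b) w" for b
      using f that by (metis append_eq_conv_conj prefix_def)
    then show ?thesis by (simp add: phi_def)
  qed
  with f show "f \<in> syz G J wg" by (auto simp: syz_def)
qed

lemma fmod_mono_iff:
  "fmod G J (mono b u :: 'b \<times> 'x list \<Rightarrow> 'k::zero_neq_one) \<longleftrightarrow> b \<in> J \<and> \<not> inI G u"
  by (auto simp: fmod_def mono_def)

lemma mono_in_syz_iff:
  assumes "prefix_free_rows J wg"
  shows "(mono b u :: (nat \<times> nat) \<times> 'x list \<Rightarrow> 'k::{comm_monoid_add, zero_neq_one}) \<in> syz G J wg
    \<longleftrightarrow> b \<in> J \<and> \<not> inI G u \<and> inI G (wg b @ u)"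
proof -
  have "fmod G J (mono b u :: (nat \<times> nat) \<times> 'x list \<Rightarrow> 'k) \<longleftrightarrow> b \<in> J \<and> \<not> inI G u"
    by (rule fmod_mono_iff)
  moreover have "(\<forall>b' t. (mono b u :: (nat \<times> nat) \<times> 'x list \<Rightarrow> 'k) (b', t) \<noteq> 0 \<longrightarrow> inI G (wg b' @ t))
      \<longleftrightarrow> inI G (wg b @ u)"
    by (simp add: mono_def del: split_paired_All split_paired_Ex)
  ultimately show ?thesis unfolding syz_iff[OF assms] by blast
qed

definition syz_obstructions :: "'x list set \<Rightarrow> (nat \<times> nat) set \<Rightarrow> (nat \<times> nat \<Rightarrow> 'x list)
    \<Rightarrow> ((nat \<times> nat) \<times> 'x list) set" where
  "syz_obstructions G J wg = {(b, t). b \<in> J \<and> \<not> inI G t \<and> inI G (wg b @ t)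
      \<and> (\<forall>t'. strict_prefix t' t \<longrightarrow> \<not> inI G (wg b @ t'))}"

lemma syz_eq_monomial_span_obstructions:
  assumes "prefix_free_rows J wg"
  shows "(syz G J wg :: ((nat \<times> nat) \<times> 'x list \<Rightarrow> 'k::comm_monoid_add) set)
    = monomial_span G (syz_obstructions G J wg)"
proof (intro set_eqI iffI)
  fix f :: "(nat \<times> nat) \<times> 'x list \<Rightarrow> 'k" assume "f \<in> syz G J wg"
  then have fm: "fmod G J f" and zero: "\<And>b t. f (b, t) \<noteq> 0 \<Longrightarrow> inI G (wg b @ t)"
    using syz_iff[OF assms] by blast+
  have "\<exists>v. (b, v) \<in> syz_obstructions G J wg \<and> prefix v w" if nonzero: "f (b, w) \<noteq> 0" for b w
  proof -
    obtain t where "prefix t w" "inI G (wg b @ t)"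
      and "\<And>t'. strict_prefix t' t \<Longrightarrow> \<not> inI G (wg b @ t')"
      using ex_minimal_prefix[of "\<lambda>t. inI G (wg b @ t)" w] zero[OF nonzero] by blast
    moreover have "b \<in> J" "\<not> inI G w" using fm nonzero unfolding fmod_def by blast+
    ultimately show ?thesis using not_inI_prefix unfolding syz_obstructions_def by blast
  qed
  with fm show "f \<in> monomial_span G (syz_obstructions G J wg)"
    by (auto simp: monomial_span_def fmod_def)
next
  fix f :: "(nat \<times> nat) \<times> 'x list \<Rightarrow> 'k" assume f: "f \<in> monomial_span G (syz_obstructions G J wg)"
  have "b \<in> J \<and> \<not> inI G w \<and> inI G (wg b @ w)" if nonzero: "f (b, w) \<noteq> 0" for b w
  proof -
    obtain v where "\<not> inI G w" "(b, v) \<in> syz_obstructions G J wg" "prefix v w"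
      using f nonzero unfolding monomial_span_def by blast
    then show ?thesis unfolding syz_obstructions_def
      by (auto simp: prefix_def intro: inI_sublist_mono)
  qed
  with f show "f \<in> syz G J wg"
    by (simp add: syz_iff[OF assms] fmod_def monomial_span_def)
qed

lemma syz_obstruction_shorter_than_generator:
  assumes "\<not> inI G (wg b)" "(b, t) \<in> syz_obstructions G J wg"
  shows "\<exists>g\<in>G. length t < length g"
proof (rule obstruction_shorter_than_generator[OF assms(1)])
  have "t \<noteq> []" using assms by (auto simp: syz_obstructions_def)
  then have "strict_prefix (butlast t) t" by (rule strict_prefix_butlast)
  with assms(2) show "\<not> inI G (wg b @ butlast t)" by (auto simp: syz_obstructions_def)
qed (use assms(2) in \<open>auto simp: syz_obstructions_def\<close>)

lemma finite_syz_obstructions: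
  fixes G :: "('x::finite) list set"
  assumes "finite G" "finite J" "\<forall>b\<in>J. \<not> inI G (wg b)"
  shows "finite (syz_obstructions G J wg)"
proof (rule finite_subset)
  show "syz_obstructions G J wg \<subseteq> J \<times> {t. length t \<le> Max (length ` G)}"
  proof clarify
    fix b t assume bt: "(b, t) \<in> syz_obstructions G J wg"
    then have "b \<in> J" by (simp add: syz_obstructions_def)
    with bt assms(3) obtain g where "g \<in> G" "length t < length g"
      using syz_obstruction_shorter_than_generator by blast
    moreover have "length g \<le> Max (length ` G)" using assms(1) \<open>g \<in> G\<close> by simp
    ultimately show "b \<in> J \<and> t \<in> {t. length t \<le> Max (length ` G)}" using \<open>b \<in> J\<close> by simp
  qed
  show "finite (J \<times> {t :: 'x list. length t \<le> Max (length ` G)})"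
    using finite_lists_length_le[OF finite_UNIV] by (intro finite_cartesian_product assms(2)) simp
qed

lemma minimal_generator_strict_prefix_notin:
  assumes "K = monomial_span G S" "\<forall>S'. S' \<subset> S \<longrightarrow> K \<noteq> monomial_span G S'"
    and "(b, u) \<in> S" "strict_prefix v u" "\<not> inI G v"
  shows "(mono b v :: 'b \<times> 'x list \<Rightarrow> 'k::zero_neq_one) \<notin> K"
proof
  assume "mono b v \<in> K"
  then obtain v' where "(b, v') \<in> S" "prefix v' v"
    using assms(1) mono_in_monomial_span_iff by metis
  moreover from this(2) have "strict_prefix v' u" using assms(4) by (rule prefix_order.le_less_trans)
  ultimately have "monomial_span G (S - {(b, u)}) = monomial_span G S"
    by (intro monomial_span_remove_redundant)
  with assms(1-3) show False by blast
qed

lemma minimal_syz_generator_shorter_than_generator: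
  assumes "prefix_free_rows J wg" "\<forall>b\<in>J. \<not> inI G (wg b)"
    and "(syz G J wg :: ((nat \<times> nat) \<times> 'x list \<Rightarrow> 'k::{comm_monoid_add, zero_neq_one}) set)
      = monomial_span G S"
    and "\<forall>S'. S' \<subset> S \<longrightarrow> (syz G J wg :: ((nat \<times> nat) \<times> 'x list \<Rightarrow> 'k) set) \<noteq> monomial_span G S'"
    and "(b, u) \<in> S" "\<not> inI G u"
  shows "\<exists>g\<in>G. length u < length g"
proof -
  have "(mono b u :: (nat \<times> nat) \<times> 'x list \<Rightarrow> 'k) \<in> syz G J wg"
    unfolding assms(3) mono_in_monomial_span_iff using assms(5,6) by blast
  then have bJ: "b \<in> J" and "inI G (wg b @ u)"
    using mono_in_syz_iff[OF assms(1)] by blast+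
  moreover have "\<not> inI G (wg b @ butlast u)"
  proof (cases "u = []")
    case False
    then have "strict_prefix (butlast u) u" by (rule strict_prefix_butlast)
    moreover have "\<not> inI G (butlast u)" using \<open>\<not> inI G u\<close> prefixeq_butlast not_inI_prefix by blast
    ultimately have "(mono b (butlast u) :: (nat \<times> nat) \<times> 'x list \<Rightarrow> 'k) \<notin> syz G J wg"
      using minimal_generator_strict_prefix_notin[OF assms(3,4,5)] by blast
    with bJ \<open>\<not> inI G (butlast u)\<close> show ?thesis using mono_in_syz_iff[OF assms(1)] by blast
  qed (use assms(2) bJ in simp)
  ultimately show ?thesis using obstruction_shorter_than_generator assms(2,6) by blast
qed

theorem mainTheorem15:
  fixes G :: "('x::finite) list set"
    and r :: nat
    and J :: "(nat \<times> nat) set"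
    and wg :: "nat \<times> nat \<Rightarrow> 'x list"
    and \<delta> :: "nat \<Rightarrow> int"
  assumes basisI: "monomial_basis G"
    and finJ: "finite J"
    and rows: "\<forall>b\<in>J. fst b \<in> {1..r}"
    and normal: "\<forall>b\<in>J. \<not> inI G (wg b)"
    and minM: "\<forall>b\<in>J. \<forall>b'\<in>J. b \<noteq> b' \<and> fst b = fst b' \<longrightarrow> \<not> prefix (wg b) (wg b')"
  defines "d \<equiv> int (Max (length ` G))"
    and "\<Delta> \<equiv> Max (Deg \<delta> wg ` J)"
    and "K \<equiv> (syz G J wg :: ((nat \<times> nat) \<times> 'x list \<Rightarrow> 'k::field) set)"
  shows "(\<exists>S. finite S \<and> (\<forall>(b, u)\<in>S. b \<in> J \<and> \<not> inI G u)
              \<and> K = rsub G ((\<lambda>(b, u). mono b u) ` S))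
       \<and> (\<forall>S. (\<forall>(b, u)\<in>S. b \<in> J \<and> \<not> inI G u)
              \<and> K = rsub G ((\<lambda>(b, u). mono b u) ` S)
              \<and> (\<forall>S'. S' \<subset> S \<longrightarrow> K \<noteq> rsub G ((\<lambda>(b, u). mono b u) ` S'))
            \<longrightarrow> (\<forall>(b, u)\<in>S. Deg \<delta> wg b + int (length u) \<le> \<Delta> + d - 1))"
proof -
  have rows_free: "prefix_free_rows J wg" using minM by (simp add: prefix_free_rows_def)
  have span: "rsub G ((\<lambda>(b, u). mono b u) ` S) = monomial_span G S"
    if "\<forall>(b, u)\<in>S. b \<in> J \<and> \<not> inI G u" for S
    using that by (intro rsub_monomials_eq_monomial_span) blast
  let ?S = "syz_obstructions G J wg"
  have S_ok: "\<forall>(b, u)\<in>?S. b \<in> J \<and> \<not> inI G u" by (auto simp: syz_obstructions_def)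
  moreover have "finite ?S"
    using basisI finJ normal by (intro finite_syz_obstructions) (auto simp: monomial_basis_def)
  moreover have "K = rsub G ((\<lambda>(b, u). mono b u) ` ?S)"
    unfolding K_def syz_eq_monomial_span_obstructions[OF rows_free] span[OF S_ok] ..
  moreover have "Deg \<delta> wg b + int (length u) \<le> \<Delta> + d - 1"
    if S: "\<forall>(b, u)\<in>S. b \<in> J \<and> \<not> inI G u" "K = rsub G ((\<lambda>(b, u). mono b u) ` S)"
      "\<forall>S'. S' \<subset> S \<longrightarrow> K \<noteq> rsub G ((\<lambda>(b, u). mono b u) ` S')" and bu: "(b, u) \<in> S" for S b u
  proof -
    have "b \<in> J" "\<not> inI G u" using S(1) bu by auto
    have "K \<noteq> monomial_span G S'" if "S' \<subset> S" for S'
    proof -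
      have "\<forall>(b, u)\<in>S'. b \<in> J \<and> \<not> inI G u" using S(1) that by blast
      with S(3) that span[of S'] show ?thesis by auto
    qed
    moreover have "K = monomial_span G S" using S(1,2) by (simp add: span)
    ultimately obtain g where "g \<in> G" "length u < length g"
      using minimal_syz_generator_shorter_than_generator[OF rows_free normal _ _ bu \<open>\<not> inI G u\<close>]
      unfolding K_def by blast
    moreover have "length g \<le> Max (length ` G)" "Deg \<delta> wg b \<le> \<Delta>"
      using \<open>g \<in> G\<close> \<open>b \<in> J\<close> basisI finJ by (auto simp: monomial_basis_def \<Delta>_def)
    ultimately show ?thesis unfolding d_def by linarith
  qed
  ultimately show ?thesis by blast
qed

end
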